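(* Let $T=\langle a,b,c\rangle$ with $1<a<b<c$, $\gcd(a,b)=\gcd(a,c)=\gcd(b,c)=1$ and $c\notin\langle a,b\rangle$, and let $\mathrm L(l,h,w,y)$ be the (unique) L-shape related to $T$. Then $h<a$ and $l<b$.
   Context: $\langle a,b\rangle=\{xa+yb:x,y\in\mathbb N\}$ and $T=\langle a,b,c\rangle=\{xa+yb+zc:x,y,z\in\mathbb N\}$. For $(i,j)\in\mathbb N^2$ let $[\![i,j]\!]=[i,i+1)\times[j,j+1)\subset\mathbb R^2$. For integers $0\le w<l$, $0\le y<h$, the L-shape $\mathrm L(l,h,w,y)$ is the set of unit squares $[\![i,j]\!]$ with $0\le i<l$, $0\le j<h$, excluding those with $i\ge l-w$ and $j\ge h-y$ (it has $lh-wy$ squares). An L-shape $\mathcal H$ is related to $T$ if it consists of exactly $c$ squares, every residue class modulo $c$ equals $ia+jb \bmod c$ for exactly one $[\![i,j]\!]\in\mathcal H$, and for each $[\![i,j]\!]\in\mathcal H$, $ia+jb=\min\{sa+tb:(s,t)\in\mathbb N^2,\ sa+tb\equiv ia+jb \pmod c\}$. *)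

theory Defs
  imports Main
begin

definition gen2 :: "nat \<Rightarrow> nat \<Rightarrow> nat set" where
  "gen2 a b = {x * a + y * b | x y. True}"

text \<open>The L-shape L(l,h,w,y); the unit square [[i,j]] is represented by the pair (i,j).\<close>
definition Lshape :: "nat \<Rightarrow> nat \<Rightarrow> nat \<Rightarrow> nat \<Rightarrow> (nat \<times> nat) set" where
  "Lshape l h w y = {(i, j). i < l \<and> j < h \<and> \<not> (i \<ge> l - w \<and> j \<ge> h - y)}"

definition related :: "nat \<Rightarrow> nat \<Rightarrow> nat \<Rightarrow> (nat \<times> nat) set \<Rightarrow> bool" where
  "related a b c H \<longleftrightarrow>
     card H = c \<and>
     (\<forall>r < c. \<exists>!p. p \<in> H \<and> (fst p * a + snd p * b) mod c = r) \<and>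
     (\<forall>(i, j) \<in> H. i * a + j * b =
        (LEAST n. \<exists>s t. n = s * a + t * b \<and> n mod c = (i * a + j * b) mod c))"

end

theory Submission
  imports Defs "HOL-Number_Theory.Cong"
begin

text \<open>
  Since \<open>c \<notin> \<langle>a,b\<rangle>\<close> and \<open>gcd a b = 1\<close>, solving \<open>y b \<equiv> c (mod a)\<close> with \<open>0 \<le> y < a\<close>
  gives \<open>y b = c + x a\<close> for some \<open>x \<in> \<nat>\<close>, and symmetrically \<open>x' a = c + y' b\<close> with \<open>y' < b\<close>.
  The square \<open>(0, y)\<close> has value \<open>y b\<close>, which is congruent modulo \<open>c\<close> to the smaller
  element \<open>x a\<close> of \<open>\<langle>a,b\<rangle>\<close>, so it cannot lie in a related L-shape; as the first column
  of the L-shape has full height \<open>h\<close>, this forces \<open>h \<le> y < a\<close>. Likewise \<open>l < b\<close>.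
\<close>

lemma gen2_commute: "gen2 a b = gen2 b a"
  unfolding gen2_def by (blast intro: add.commute)

lemma not_in_gen2E:
  fixes a b n :: nat
  assumes "0 < a" and "coprime a b" and "n \<notin> gen2 a b"
  obtains x y where "y < a" and "n + x * a = y * b"
proof -
  obtain y0 where "[b * y0 = n] (mod a)"
    using cong_solve_dvd_nat[of b a n] assms(2) by (auto simp: coprime_commute)
  define y where "y = y0 mod a"
  have "y < a"
    using assms(1) by (simp add: y_def)
  have cong: "[y * b = n] (mod a)"
    using \<open>[b * y0 = n] (mod a)\<close>
    by (simp add: y_def cong_def mod_mult_right_eq mult.commute)
  have "n < y * b"
  proof (rule ccontr)
    assume "\<not> n < y * b"
    then obtain k where "n = k * a + y * b"
      using cong_le_nat[of "y * b" n a] cong by (auto simp: cong_sym_eq)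
    then have "n \<in> gen2 a b"
      by (auto simp: gen2_def)
    with assms(3) show False ..
  qed
  then obtain x where "y * b = x * a + n"
    using cong_le_nat[of n "y * b" a] cong by auto
  then have "n + x * a = y * b"
    by simp
  with \<open>y < a\<close> show thesis
    by (rule that)
qed

lemma related_value_ne_c_plus_gen2:
  fixes a b c :: nat
  assumes "related a b c H" and "(i, j) \<in> H" and "0 < c"
  shows "i * a + j * b \<noteq> c + (s * a + t * b)"
proof
  assume eq: "i * a + j * b = c + (s * a + t * b)"
  have "i * a + j * b
      = (LEAST n. \<exists>s t. n = s * a + t * b \<and> n mod c = (i * a + j * b) mod c)"
    using assms(1,2) unfolding related_def by auto
  also have "\<dots> \<le> s * a + t * b"
    by (rule Least_le) (use eq in auto)
  finally show False
    using eq \<open>0 < c\<close> by simp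
qed

theorem lemma10:
  fixes a b c l h w y :: nat
  assumes "1 < a" and "a < b" and "b < c"
    and "gcd a b = 1" and "gcd a c = 1" and "gcd b c = 1"
    and "c \<notin> gen2 a b"
    and "w < l" and "y < h"
    and "related a b c (Lshape l h w y)"
  shows "h < a \<and> l < b"
proof
  have "coprime a b" and "0 < a" and "0 < b" and "0 < c"
    using assms(1-4) by (auto simp: coprime_iff_gcd_eq_1)
  show "h < a"
  proof (rule ccontr)
    assume "\<not> h < a"
    obtain x j where "j < a" "c + x * a = j * b"
      using \<open>0 < a\<close> \<open>coprime a b\<close> assms(7) by (rule not_in_gen2E)
    moreover have "(0, j) \<in> Lshape l h w y"
      using \<open>j < a\<close> \<open>\<not> h < a\<close> assms(8) by (auto simp: Lshape_def)
    ultimately show False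
      using related_value_ne_c_plus_gen2[OF assms(10) _ \<open>0 < c\<close>, of 0 j x 0] by simp
  qed
  show "l < b"
  proof (rule ccontr)
    assume "\<not> l < b"
    obtain x i where "i < b" "c + x * b = i * a"
      using \<open>0 < b\<close> \<open>coprime a b\<close>[unfolded coprime_commute[of a]]
        assms(7)[unfolded gen2_commute[of a]]
      by (rule not_in_gen2E)
    moreover have "(i, 0) \<in> Lshape l h w y"
      using \<open>i < b\<close> \<open>\<not> l < b\<close> assms(9) by (auto simp: Lshape_def)
    ultimately show False
      using related_value_ne_c_plus_gen2[OF assms(10) _ \<open>0 < c\<close>, of i 0 0 x] by simp
  qed
qed

end
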